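(* Let $(C,\delta,P)$ be a chain complex with involution over $\mathbb{Z}_D$. Let $\mathcal{V}\le C$ be a subspace and $\mathcal{V}^>$ a direct complement of it, and let $W,W^>:C\to C$ be the projections onto $\mathcal{V}$ and $\mathcal{V}^>$ corresponding to the decomposition $C=\mathcal{V}\oplus\mathcal{V}^>$. Suppose $PW=WP$. Let $S^>=W\delta(\mathcal{V}^>)$, $\mathcal{V}'=\mathcal{V}/S^>$, and define $\varphi:C\to\mathcal{V}'$ by $\varphi(h)=Wh+S^>$. Then the maps $\delta',P':\mathcal{V}'\to\mathcal{V}'$ given by $\delta'(x+S^>)=\varphi(\delta(x))$ and $P'(x+S^>)=\varphi(P(x))$ (for $x\in\mathcal{V}$) are well defined, $(\mathcal{V}',\delta',P')$ is a chain complex with involution, and $\varphi$ is a chain map ($\delta'\varphi=\varphi\delta$) satisfying $\varphi P=P'\varphi$. Moreover, $\ker\delta'=\varphi(\delta^{-1}(\mathcal{V}^>))$ and $\operatorname{im}\delta'=\varphi(\operatorname{im}\delta)$.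
   Context: $D$ is an odd prime and $\mathbb{Z}_D$ the field with $D$ elements. A chain complex with involution over $\mathbb{Z}_D$ is a triple $(C,\partial,P)$ where $C$ is a $\mathbb{Z}_D$-vector space and $\partial,P:C\to C$ are linear maps with $\partial^2=0$, $P^2=I$ and $\partial P+P\partial=0$. $\delta^{-1}(\mathcal{V}^>)$ denotes the preimage $\{x\in C:\delta x\in\mathcal{V}^>\}$. *)

theory Defs
  imports Complex_Main "HOL-Computational_Algebra.Primes"
begin

definition chain_cx_inv ::
  "('k::field \<Rightarrow> 'v::ab_group_add \<Rightarrow> 'v) \<Rightarrow> ('v \<Rightarrow> 'v) \<Rightarrow> ('v \<Rightarrow> 'v) \<Rightarrow> bool" where
  "chain_cx_inv scale d P \<longleftrightarrow>
     Vector_Spaces.linear scale scale d \<and> Vector_Spaces.linear scale scale P \<and>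
     (\<forall>x. d (d x) = 0) \<and> (\<forall>x. P (P x) = x) \<and> (\<forall>x. d (P x) + P (d x) = 0)"

text \<open>Cosets x + S and the quotient V / S (as the set of cosets of elements of V),
  with its vector space operations; the zero of the quotient is the coset S itself.\<close>
definition coset :: "'v::ab_group_add set \<Rightarrow> 'v \<Rightarrow> 'v set" where
  "coset S x = {x + s | s. s \<in> S}"

definition quot :: "'v::ab_group_add set \<Rightarrow> 'v set \<Rightarrow> 'v set set" where
  "quot V S = coset S ` V"

definition qadd :: "'v::ab_group_add set \<Rightarrow> 'v set \<Rightarrow> 'v set" where
  "qadd X Y = {x + y | x y. x \<in> X \<and> y \<in> Y}"

definition qscale :: "('k \<Rightarrow> 'v::ab_group_add \<Rightarrow> 'v) \<Rightarrow> 'v set \<Rightarrow> 'k \<Rightarrow> 'v set \<Rightarrow> 'v set" where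
  "qscale scale S c X = {scale c x + s | x s. x \<in> X \<and> s \<in> S}"

definition quot_chain_cx_inv ::
  "('k \<Rightarrow> 'v::ab_group_add \<Rightarrow> 'v) \<Rightarrow> 'v set \<Rightarrow> 'v set \<Rightarrow> ('v set \<Rightarrow> 'v set) \<Rightarrow> ('v set \<Rightarrow> 'v set) \<Rightarrow> bool" where
  "quot_chain_cx_inv scale V S d P \<longleftrightarrow>
     (\<forall>X\<in>quot V S. d X \<in> quot V S \<and> P X \<in> quot V S) \<and>
     (\<forall>X\<in>quot V S. \<forall>Y\<in>quot V S. d (qadd X Y) = qadd (d X) (d Y) \<and> P (qadd X Y) = qadd (P X) (P Y)) \<and>
     (\<forall>c. \<forall>X\<in>quot V S. d (qscale scale S c X) = qscale scale S c (d X) \<and>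
                        P (qscale scale S c X) = qscale scale S c (P X)) \<and>
     (\<forall>X\<in>quot V S. d (d X) = S) \<and> (\<forall>X\<in>quot V S. P (P X) = X) \<and>
     (\<forall>X\<in>quot V S. qadd (d (P X)) (P (d X)) = S)"

definition induced :: "'v::ab_group_add set \<Rightarrow> 'v set \<Rightarrow> ('v \<Rightarrow> 'v) \<Rightarrow> ('v \<Rightarrow> 'v) \<Rightarrow> 'v set \<Rightarrow> 'v set" where
  "induced V S W f X = coset S (W (f (SOME x. x \<in> V \<and> X = coset S x)))"

end

theory Submission
  imports Defs
begin

text \<open>Write \<open>\<phi> h = W h + S\<close> with \<open>S = W \<delta>(V\<^sup>>)\<close>. Everything rests on two facts modulo \<open>S\<close>:
  \<open>W \<delta> W h \<equiv> W \<delta> h\<close>, since \<open>W h - h \<in> V\<^sup>>\<close>; and \<open>W \<delta>\<close>, \<open>W P\<close> map \<open>S\<close> into itself, since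
  \<open>\<delta>\<^sup>2 = 0\<close>, \<open>P \<delta> = -\<delta> P\<close> and \<open>P(V\<^sup>>) \<subseteq> V\<^sup>>\<close>. So \<open>\<phi>(\<delta> h)\<close> and \<open>\<phi>(P h)\<close> depend only on
  \<open>\<phi> h\<close>: this gives well-definedness and the chain map property, and the identities of the
  quotient complex are the images under \<open>\<phi>\<close> of \<open>\<delta>\<delta> = 0\<close>, \<open>PP = 1\<close>, \<open>\<delta>P + P\<delta> = 0\<close>.
  A class \<open>\<phi> x\<close> is a cycle iff \<open>W \<delta> x = W \<delta> g\<close> for some \<open>g \<in> V\<^sup>>\<close>, and then the
  representative \<open>x - g\<close> of the same class satisfies \<open>\<delta>(x - g) \<in> V\<^sup>>\<close>.\<close>

lemma coset_mem_iff: "z \<in> coset S x \<longleftrightarrow> z - x \<in> S"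
proof
  assume "z \<in> coset S x"
  then show "z - x \<in> S"
    by (auto simp: coset_def)
next
  assume "z - x \<in> S"
  moreover have "z = x + (z - x)"
    by simp
  ultimately show "z \<in> coset S x"
    unfolding coset_def by blast
qed

lemma coset_zero: "coset S 0 = S"
  by (simp add: coset_mem_iff set_eq_iff)

context module
begin

lemma coset_eq_iff:
  assumes "subspace S"
  shows "coset S x = coset S y \<longleftrightarrow> x - y \<in> S"
proof
  assume "coset S x = coset S y"
  moreover have "x \<in> coset S x"
    using subspace_0[OF assms] by (simp add: coset_mem_iff)
  ultimately show "x - y \<in> S"
    by (simp add: coset_mem_iff)
next
  assume xy: "x - y \<in> S"
  have "z - x \<in> S \<longleftrightarrow> z - y \<in> S" for z
    using subspace_add[OF assms _ xy, of "z - x"] subspace_diff[OF assms _ xy, of "z - y"]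
    by (auto simp: algebra_simps)
  then show "coset S x = coset S y"
    by (auto simp: coset_mem_iff)
qed

lemma coset_eq_subspace_iff:
  assumes "subspace S"
  shows "coset S x = S \<longleftrightarrow> x \<in> S"
  using coset_eq_iff[OF assms, of x 0] by (simp add: coset_zero)

lemma qadd_coset:
  assumes "subspace S"
  shows "qadd (coset S x) (coset S y) = coset S (x + y)"
proof (rule set_eqI)
  fix z
  show "z \<in> qadd (coset S x) (coset S y) \<longleftrightarrow> z \<in> coset S (x + y)"
  proof
    assume "z \<in> qadd (coset S x) (coset S y)"
    then obtain p q where "z = p + q" "p - x \<in> S" "q - y \<in> S"
      unfolding qadd_def coset_mem_iff by blast
    then show "z \<in> coset S (x + y)"
      using subspace_add[OF assms] by (force simp: coset_mem_iff algebra_simps)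
  next
    assume "z \<in> coset S (x + y)"
    then have "z - y \<in> coset S x" "y \<in> coset S y"
      using subspace_0[OF assms] by (auto simp: coset_mem_iff algebra_simps)
    moreover have "z = (z - y) + y"
      by simp
    ultimately show "z \<in> qadd (coset S x) (coset S y)"
      unfolding qadd_def by blast
  qed
qed

lemma qscale_coset:
  assumes "subspace S"
  shows "qscale scale S c (coset S x) = coset S (c *s x)"
proof (rule set_eqI)
  fix z
  show "z \<in> qscale scale S c (coset S x) \<longleftrightarrow> z \<in> coset S (c *s x)"
  proof
    assume "z \<in> qscale scale S c (coset S x)"
    then obtain p t where "z = c *s p + t" "p - x \<in> S" "t \<in> S"
      unfolding qscale_def coset_mem_iff by blast
    then have "z - c *s x = c *s (p - x) + t"
      by (simp add: algebra_simps)
    moreover have "c *s (p - x) + t \<in> S"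
      using \<open>p - x \<in> S\<close> \<open>t \<in> S\<close> subspace_add[OF assms] subspace_scale[OF assms] by simp
    ultimately show "z \<in> coset S (c *s x)"
      by (simp add: coset_mem_iff)
  next
    assume "z \<in> coset S (c *s x)"
    then have "z - c *s x \<in> S" "x \<in> coset S x"
      using subspace_0[OF assms] by (simp_all add: coset_mem_iff)
    moreover have "z = c *s x + (z - c *s x)"
      by simp
    ultimately show "z \<in> qscale scale S c (coset S x)"
      unfolding qscale_def by blast
  qed
qed

end

lemma induced_coset:
  assumes "x \<in> V"
    and cong: "\<And>x y. coset S x = coset S y \<Longrightarrow> coset S (W (f x)) = coset S (W (f y))"
  shows "induced V S W f (coset S x) = coset S (W (f x))"
proof -
  let ?y = "SOME y. y \<in> V \<and> coset S x = coset S y"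
  have "coset S x = coset S ?y"
    by (rule conjunct2, rule someI[of _ x]) (use assms(1) in simp)
  then have "coset S (W (f ?y)) = coset S (W (f x))"
    by (rule cong[symmetric])
  then show ?thesis
    by (simp add: induced_def)
qed

locale complementary_projection = module scale
  for scale :: "'k::comm_ring_1 \<Rightarrow> 'v::ab_group_add \<Rightarrow> 'v" (infixr \<open>*s\<close> 75) +
  fixes V Vg :: "'v set" and W Wg :: "'v \<Rightarrow> 'v"
  assumes subspace_V: "subspace V" and subspace_Vg: "subspace Vg"
    and V_inter_Vg: "V \<inter> Vg = {0}"
    and W_in_V: "W x \<in> V" and Wg_in_Vg: "Wg x \<in> Vg" and W_plus_Wg: "W x + Wg x = x"
begin

lemma W_eq:
  assumes "v \<in> V" "w \<in> Vg"
  shows "W (v + w) = v"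
proof -
  have "W (v + w) = v + w - Wg (v + w)"
    using W_plus_Wg[of "v + w"] by (simp add: eq_diff_eq)
  then have "W (v + w) - v = w - Wg (v + w)"
    by simp
  moreover have "W (v + w) - v \<in> V" "w - Wg (v + w) \<in> Vg"
    by (intro subspace_diff subspace_V subspace_Vg W_in_V Wg_in_Vg assms)+
  ultimately have "W (v + w) - v \<in> V \<inter> Vg"
    by simp
  then show ?thesis
    using V_inter_Vg by simp
qed

lemma W_id_on_V: "v \<in> V \<Longrightarrow> W v = v"
  using W_eq[of v 0] subspace_0[OF subspace_Vg] by simp

lemma W_W: "W (W x) = W x"
  by (simp add: W_id_on_V W_in_V)

sublocale W: module_hom scale scale W
proof unfold_locales
  fix x y
  have "W ((W x + W y) + (Wg x + Wg y)) = W x + W y"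
    by (intro W_eq subspace_add subspace_V subspace_Vg W_in_V Wg_in_Vg)
  moreover have "(W x + W y) + (Wg x + Wg y) = (W x + Wg x) + (W y + Wg y)"
    by (simp add: algebra_simps)
  ultimately show "W (x + y) = W x + W y"
    by (simp add: W_plus_Wg)
next
  fix c x
  have "W (c *s W x + c *s Wg x) = c *s W x"
    by (intro W_eq subspace_scale subspace_V subspace_Vg W_in_V Wg_in_Vg)
  then show "W (c *s x) = c *s W x"
    by (simp add: scale_right_distrib[symmetric] W_plus_Wg)
qed

lemma range_W: "range W = V"
  using W_in_V W_id_on_V by (metis image_subsetI rangeI subsetI subset_antisym)

lemma W_eq_0_iff: "W x = 0 \<longleftrightarrow> x \<in> Vg"
proof
  assume "W x = 0"
  then show "x \<in> Vg"
    using W_plus_Wg[of x] Wg_in_Vg[of x] by simp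
next
  assume "x \<in> Vg"
  then show "W x = 0"
    using W_eq[of 0 x] subspace_0[OF subspace_V] by simp
qed

lemma W_zero_on_Vg: "w \<in> Vg \<Longrightarrow> W w = 0"
  by (simp add: W_eq_0_iff)

lemma W_minus_id_in_Vg: "W x - x \<in> Vg"
proof -
  have "W (W x - x) = 0"
    by (simp add: W.diff W_W)
  then show ?thesis
    using W_eq_0_iff by blast
qed

end

locale chain_reduction =
  complementary_projection scale V Vg W Wg +
  d: module_hom scale scale d + P: module_hom scale scale P
  for scale :: "'k::comm_ring_1 \<Rightarrow> 'v::ab_group_add \<Rightarrow> 'v" (infixr \<open>*s\<close> 75)
    and V Vg W Wg d P +
  fixes S :: "'v set"
  assumes d_d: "d (d x) = 0" and P_P: "P (P x) = x" and d_P_anticomm: "d (P x) + P (d x) = 0"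
    and P_W_commute: "P (W x) = W (P x)"
    and S_def: "S = W ` d ` Vg"
begin

abbreviation quot_proj :: "'v \<Rightarrow> 'v set" where
  "quot_proj h \<equiv> coset S (W h)"

abbreviation quot_d :: "'v set \<Rightarrow> 'v set" where
  "quot_d \<equiv> induced V S W d"

abbreviation quot_P :: "'v set \<Rightarrow> 'v set" where
  "quot_P \<equiv> induced V S W P"

lemma subspace_S: "subspace S"
  unfolding S_def by (intro W.subspace_image d.subspace_image subspace_Vg)

lemma W_d_in_S: "g \<in> Vg \<Longrightarrow> W (d g) \<in> S"
  by (simp add: S_def)

lemma P_in_Vg:
  assumes "g \<in> Vg"
  shows "P g \<in> Vg"
proof -
  have "W (P g) = P (W g)"
    by (simp add: P_W_commute)
  also have "\<dots> = 0"
    using assms by (simp add: W_zero_on_Vg)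
  finally show ?thesis
    using W_eq_0_iff by blast
qed

lemma W_P_W: "W (P (W x)) = W (P x)"
  by (simp add: P_W_commute W_W)

lemma W_d_W_cong: "W (d (W h)) - W (d h) \<in> S"
proof -
  have "W (d (W h)) - W (d h) = W (d (W h - h))"
    by (simp add: W.diff d.diff)
  then show ?thesis
    using W_d_in_S W_minus_id_in_Vg by simp
qed

lemma S_closed_W_d:
  assumes "s \<in> S"
  shows "W (d s) \<in> S"
proof -
  obtain g where "s = W (d g)"
    using assms S_def by auto
  then show ?thesis
    using W_d_W_cong[of "d g"] by (simp add: d_d)
qed

lemma S_closed_W_P:
  assumes "s \<in> S"
  shows "W (P s) \<in> S"
proof -
  obtain g where g: "g \<in> Vg" "s = W (d g)"
    using assms S_def by auto
  have "P (d g) = d (- P g)"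
    using d_P_anticomm[of g] by (simp add: d.neg eq_neg_iff_add_eq_0 add.commute)
  then have "W (P s) = W (d (- P g))"
    by (simp add: g W_P_W)
  then show ?thesis
    using g P_in_Vg W_d_in_S subspace_neg[OF subspace_Vg] by simp
qed

lemma quot_proj_eq_iff: "quot_proj x = quot_proj y \<longleftrightarrow> W x - W y \<in> S"
  by (rule coset_eq_iff[OF subspace_S])

lemma quot_proj_cong:
  assumes f: "module_hom scale scale f" and fS: "\<And>s. s \<in> S \<Longrightarrow> W (f s) \<in> S"
    and "coset S x = coset S y"
  shows "quot_proj (f x) = quot_proj (f y)"
proof -
  have "W (f (x - y)) \<in> S"
    using assms(3) fS coset_eq_iff[OF subspace_S] by blast
  then show ?thesis
    by (simp add: quot_proj_eq_iff module_hom.diff[OF f] W.diff)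
qed

lemma quot_proj_d_cong: "coset S x = coset S y \<Longrightarrow> quot_proj (d x) = quot_proj (d y)"
  by (rule quot_proj_cong[OF d.module_hom_axioms S_closed_W_d])

lemma quot_proj_P_cong: "coset S x = coset S y \<Longrightarrow> quot_proj (P x) = quot_proj (P y)"
  by (rule quot_proj_cong[OF P.module_hom_axioms S_closed_W_P])

lemma quot_d_coset: "x \<in> V \<Longrightarrow> quot_d (coset S x) = quot_proj (d x)"
  by (rule induced_coset, assumption, rule quot_proj_d_cong)

lemma quot_P_coset: "x \<in> V \<Longrightarrow> quot_P (coset S x) = quot_proj (P x)"
  by (rule induced_coset, assumption, rule quot_proj_P_cong)

lemma quot_d_quot_proj: "quot_d (quot_proj h) = quot_proj (d h)"
  using quot_d_coset[OF W_in_V] W_d_W_cong quot_proj_eq_iff by simp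

lemma quot_P_quot_proj: "quot_P (quot_proj h) = quot_proj (P h)"
  using quot_P_coset[OF W_in_V] W_P_W by simp

lemma quot_eq_range_quot_proj: "quot V S = range quot_proj"
  by (simp add: quot_def range_W[symmetric] image_image)

lemma qadd_quot_proj: "qadd (quot_proj x) (quot_proj y) = quot_proj (x + y)"
  by (simp add: qadd_coset[OF subspace_S] W.add)

lemma qscale_quot_proj: "qscale scale S c (quot_proj x) = quot_proj (c *s x)"
  by (simp add: qscale_coset[OF subspace_S] W.scale)

lemma quot_chain_cx_inv: "quot_chain_cx_inv scale V S quot_d quot_P"
  unfolding quot_chain_cx_inv_def quot_eq_range_quot_proj
  by (simp add: quot_d_quot_proj quot_P_quot_proj qadd_quot_proj qscale_quot_proj
      d.add P.add d.scale P.scale d_d P_P d_P_anticomm coset_zero)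

lemma quot_d_kernel: "{X \<in> quot V S. quot_d X = S} = quot_proj ` {x. d x \<in> Vg}"
proof (intro set_eqI iffI)
  fix X
  assume "X \<in> {X \<in> quot V S. quot_d X = S}"
  then obtain h where X: "X = quot_proj h" and "quot_proj (d h) = S"
    by (auto simp: quot_eq_range_quot_proj quot_d_quot_proj)
  then have "W (d h) \<in> S"
    using coset_eq_subspace_iff[OF subspace_S] by blast
  then obtain g where g: "g \<in> Vg" "W (d h) = W (d g)"
    using S_def by auto
  have "W (d (h - g)) = 0"
    using g by (simp add: d.diff W.diff)
  then have "d (h - g) \<in> Vg"
    using W_eq_0_iff by blast
  moreover have "quot_proj (h - g) = X"
    using g X by (simp add: W.diff W_zero_on_Vg)
  ultimately show "X \<in> quot_proj ` {x. d x \<in> Vg}"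
    by blast
next
  fix X
  assume "X \<in> quot_proj ` {x. d x \<in> Vg}"
  then obtain h where "X = quot_proj h" "d h \<in> Vg"
    by blast
  then show "X \<in> {X \<in> quot V S. quot_d X = S}"
    by (simp add: quot_eq_range_quot_proj quot_d_quot_proj W_zero_on_Vg coset_zero)
qed

lemma quot_d_image: "quot_d ` quot V S = quot_proj ` range d"
  by (simp add: quot_eq_range_quot_proj image_image quot_d_quot_proj)

end

theorem lemma2:
  fixes scale :: "'k::field \<Rightarrow> 'v::ab_group_add \<Rightarrow> 'v"
    and D :: nat
    and d P W Wg :: "'v \<Rightarrow> 'v"
    and V Vg S :: "'v set"
  assumes "card (UNIV :: 'k set) = D" and "prime D" and "odd D"
    and "vector_space scale"
    and "chain_cx_inv scale d P"
    and "module.subspace scale V" and "module.subspace scale Vg"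
    and "V \<inter> Vg = {0}" and "\<forall>x. \<exists>v\<in>V. \<exists>w\<in>Vg. x = v + w"
    and "\<forall>x. W x \<in> V \<and> Wg x \<in> Vg \<and> x = W x + Wg x"
    and "\<forall>x. P (W x) = W (P x)"
    and "S = W ` d ` Vg"
  defines "\<phi> \<equiv> (\<lambda>h. coset S (W h))"
    and "d' \<equiv> induced V S W d"
    and "P' \<equiv> induced V S W P"
  shows "(\<forall>x\<in>V. \<forall>y\<in>V. coset S x = coset S y \<longrightarrow> \<phi> (d x) = \<phi> (d y) \<and> \<phi> (P x) = \<phi> (P y))
    \<and> (\<forall>x\<in>V. d' (coset S x) = \<phi> (d x) \<and> P' (coset S x) = \<phi> (P x))
    \<and> quot_chain_cx_inv scale V S d' P'
    \<and> (\<forall>h. d' (\<phi> h) = \<phi> (d h)) \<and> (\<forall>h. \<phi> (P h) = P' (\<phi> h))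
    \<and> {X \<in> quot V S. d' X = S} = \<phi> ` {x. d x \<in> Vg}
    \<and> d' ` quot V S = \<phi> ` range d"
proof -
  have "module scale"
    using assms(4) by (simp add: module_iff_vector_space)
  moreover have "module_hom scale scale d" "module_hom scale scale P"
    and "\<forall>x. d (d x) = 0 \<and> P (P x) = x \<and> d (P x) + P (d x) = 0"
    using assms(5) by (auto simp: chain_cx_inv_def linear_iff_module_hom)
  moreover have "\<forall>x. W x \<in> V \<and> Wg x \<in> Vg \<and> W x + Wg x = x"
    using assms(10) by metis
  ultimately interpret chain_reduction scale V Vg W Wg d P S
    using assms(6-8,11-12)
    by (intro chain_reduction.intro complementary_projection.intro
        complementary_projection_axioms.intro chain_reduction_axioms.intro) simp_all
  show ?thesis
    unfolding \<phi>_def d'_def P'_def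
    using quot_proj_d_cong quot_proj_P_cong quot_d_coset quot_P_coset quot_chain_cx_inv
      quot_d_quot_proj quot_P_quot_proj[symmetric] quot_d_kernel quot_d_image
    by blast
qed

end
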